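(* Let $n\ge 3$, $0<m<\frac{n-2}{n}$, $m\ne\frac{n-2}{n+2}$, $\lambda>0$, $\beta>0$. Let $v$ be the radially symmetric solution described in the context, $w(s)=r^2v(r)^{1-m}$ with $s=\log r$, $h(s)=w(s)-\frac{2(n-1)(n-2-nm)}{(1-m)\beta}s$, $h_1(s)=h(s)+\frac{(n-1)[n-2-(n+2)m]}{(1-m)\beta}\log s$, $K(\lambda,\beta)=\lim_{s\to\infty}h_1(s)$ (a finite limit), \[ h_2(s)=h_1(s)-K(\lambda,\beta)-\frac{(n-1)(n-2-(n+2)m)^2}{2(n-2-nm)(1-m)\beta}\cdot\frac{1+\log s}{s}, \] and \[ a_1(\lambda,\beta)=\frac{2(1-2m)(n-1)(n-2-nm)}{(1-m)^2}+\frac{(n-1)(n-2-(n+2)m)^2}{(1-m)^2}+\frac{n-2-(n+2)m}{1-m}K(\lambda,\beta)\beta . \] Then \[ h_2(s)=-\frac{(1-m)a_1(\lambda,\beta)}{2(n-2-nm)\beta s}+\frac{\varepsilon(s)}{s}\quad\text{as }s\to\infty, \] where $\varepsilon(s)\to0$ as $s\to\infty$.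
   Context: $v=v(r)$, $r=|x|$, is the unique radially symmetric positive classical solution of $\frac{n-1}{m}\Delta v^m+\frac{2\beta}{1-m}v+\beta x\cdot\nabla v=0$ in $\mathbb{R}^n$ with $v(0)=\lambda$. *)

theory Defs
  imports "HOL-Analysis.Analysis"
begin

definition partial :: "'n::finite \<Rightarrow> (real^'n \<Rightarrow> real) \<Rightarrow> real^'n \<Rightarrow> real" where
  "partial i f x = deriv (\<lambda>t. f (x + t *\<^sub>R axis i 1)) 0"

definition laplacian :: "(real^'n::finite \<Rightarrow> real) \<Rightarrow> real^'n \<Rightarrow> real" where
  "laplacian f x = (\<Sum>i\<in>UNIV. partial i (partial i f) x)"

definition C2_fun :: "(real^'n::finite \<Rightarrow> real) \<Rightarrow> bool" where
  "C2_fun f \<longleftrightarrow> (\<forall>x. f differentiable (at x))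
     \<and> (\<forall>i x. partial i f differentiable (at x))
     \<and> (\<forall>i j. continuous_on UNIV (partial j (partial i f)))"

definition classical_sol :: "real \<Rightarrow> real \<Rightarrow> (real^'n::finite \<Rightarrow> real) \<Rightarrow> bool" where
  "classical_sol m \<beta> V \<longleftrightarrow> (\<forall>x. V x > 0) \<and> C2_fun V \<and>
     (\<forall>x. (real CARD('n) - 1) / m * laplacian (\<lambda>y. V y powr m) x
          + 2 * \<beta> / (1 - m) * V x
          + \<beta> * (\<Sum>i\<in>UNIV. x $ i * partial i V x) = 0)"

definition w_fun :: "real \<Rightarrow> (real \<Rightarrow> real) \<Rightarrow> real \<Rightarrow> real" where
  "w_fun m v s = (exp s)\<^sup>2 * v (exp s) powr (1 - m)"

definition h_fun :: "real \<Rightarrow> real \<Rightarrow> real \<Rightarrow> (real \<Rightarrow> real) \<Rightarrow> real \<Rightarrow> real" where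
  "h_fun n m \<beta> v s = w_fun m v s - 2 * (n - 1) * (n - 2 - n * m) / ((1 - m) * \<beta>) * s"

definition h1_fun :: "real \<Rightarrow> real \<Rightarrow> real \<Rightarrow> (real \<Rightarrow> real) \<Rightarrow> real \<Rightarrow> real" where
  "h1_fun n m \<beta> v s = h_fun n m \<beta> v s + (n - 1) * (n - 2 - (n + 2) * m) / ((1 - m) * \<beta>) * ln s"

definition h2_fun :: "real \<Rightarrow> real \<Rightarrow> real \<Rightarrow> (real \<Rightarrow> real) \<Rightarrow> real \<Rightarrow> real \<Rightarrow> real" where
  "h2_fun n m \<beta> v K s = h1_fun n m \<beta> v s - K
     - (n - 1) * (n - 2 - (n + 2) * m)\<^sup>2 / (2 * (n - 2 - n * m) * (1 - m) * \<beta>) * ((1 + ln s) / s)"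

definition a1_fun :: "real \<Rightarrow> real \<Rightarrow> real \<Rightarrow> real \<Rightarrow> real" where
  "a1_fun n m \<beta> K = 2 * (1 - 2 * m) * (n - 1) * (n - 2 - n * m) / (1 - m)\<^sup>2
     + (n - 1) * (n - 2 - (n + 2) * m)\<^sup>2 / (1 - m)\<^sup>2
     + (n - 2 - (n + 2) * m) / (1 - m) * K * \<beta>"

end

theory Submission
  imports Defs "HOL-Real_Asymp.Real_Asymp"
begin

(*
  In the variable s = log r the profile becomes w = r^2 v^(1-m), and p = w'/w = 2 + (1-m) r v'/v
  solves the Riccati-type equation p' = -F(p) - beta w p/(n-1). Since p -> 2 as s -> -infinity
  and p' > 0 wherever p = 0, p stays positive and w increases; comparison arguments then give
  p <= 2 eventually and keep z = w p away from 0, so w grows at least linearly. A slow-variable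
  principle (if y + y'/a converges and a is bounded away from 0, then y has the same limit),
  applied in turn to p, z = w p, y = w (z - A) and y2 = w (y + A B), gives the limits 0, A, -A B
  and C2. Hence h1' = z - A + B/s = y2/w^2 + B (w - A s)/(w s) is O(log s / s^2), so h1
  converges to some K, and s^2 h1' + (B^2/A) log s -> C2/A^2 + B K/A, which integrates to the
  expansion.
*)

section \<open>Asymptotic calculus on the half-line\<close>

lemma eventually_nonpos_if_deriv_le_neg:
  fixes f f' :: "real \<Rightarrow> real"
  assumes der: "\<And>s. s \<ge> T \<Longrightarrow> (f has_real_derivative f' s) (at s)"
    and \<delta>: "\<delta> > 0" and neg: "\<And>s. s \<ge> T \<Longrightarrow> f s > 0 \<Longrightarrow> f' s \<le> -\<delta>"
  shows "eventually (\<lambda>s. f s \<le> 0) at_top"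
proof (cases "\<exists>s1\<ge>T. f s1 \<le> 0")
  case True
  then obtain s1 where s1: "s1 \<ge> T" "f s1 \<le> 0" by auto
  have "f s2 \<le> 0" if s2: "s2 \<ge> s1" for s2
  proof (rule ccontr)
    assume pos: "\<not> f s2 \<le> 0"
    have cont: "continuous_on {s1..s2} f"
      using der s1 by (meson DERIV_isCont atLeastAtMost_iff continuous_at_imp_continuous_on order_trans)
    obtain t where t: "t \<in> {s1..s2}" "\<forall>x\<in>{s1..s2}. f x \<le> f t"
      using continuous_attains_sup[OF compact_Icc _ cont] s2 by fastforce
    have "f s2 \<le> f t" using t(2) s2 by auto
    then have ft: "f t > 0" using pos by linarith
    then have ts: "t > s1" using t s1 by (cases "t = s1") auto
    have "f' t < 0" using neg[of t] t s1 ft \<delta> by auto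
    from DERIV_neg_dec_left[OF der[of t] this] t s1
    obtain e where e: "e > 0" "\<forall>h>0. h < e \<longrightarrow> f t < f (t - h)" by auto
    define h where "h = min (e/2) (t - s1)"
    have "f t < f (t - h)" using e ts by (auto simp: h_def)
    moreover have "t - h \<in> {s1..s2}" using t ts e by (auto simp: h_def)
    ultimately show False using t(2) by fastforce
  qed
  then show ?thesis by (auto simp: eventually_at_top_linorder)
next
  case False
  then have pos: "\<And>s. s \<ge> T \<Longrightarrow> f s > 0" by force
  \<comment> \<open>then f decreases at rate \<delta> forever, which is absurd\<close>
  define s where "s = T + f T / \<delta> + 1"
  have sT: "s \<ge> T" using pos[of T] \<delta> by (simp add: s_def)
  have "f s + \<delta> * s \<le> f T + \<delta> * T"
  proof (rule DERIV_nonpos_imp_nonincreasing[OF sT, of "\<lambda>x. f x + \<delta> * x", simplified])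
    fix x assume x: "T \<le> x"
    then have "f' x \<le> -\<delta>" using neg pos by blast
    then show "\<exists>y. ((\<lambda>x. f x + \<delta> * x) has_real_derivative y) (at x) \<and> y \<le> 0"
      using der[OF x] by (intro exI[of _ "f' x + \<delta>"]) (auto intro!: derivative_eq_intros)
  qed
  then have "f s \<le> f T - \<delta> * (s - T)" by (simp add: algebra_simps)
  also have "\<delta> * (s - T) = f T + \<delta>" using \<delta> by (simp add: s_def field_simps)
  finally have "f s < 0" using \<delta> by simp
  with pos[OF sT] show ?thesis by simp
qed

lemma eventually_le_if_add_deriv_div_tendsto:
  fixes y y' a :: "real \<Rightarrow> real"
  assumes der: "\<And>s. s \<ge> T \<Longrightarrow> (y has_real_derivative y' s) (at s)"
    and a: "\<And>s. s \<ge> T \<Longrightarrow> a s \<ge> amin" and amin: "amin > 0"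
    and lim: "((\<lambda>s. y s + y' s / a s) \<longlongrightarrow> L) at_top" and e: "e > 0"
  shows "eventually (\<lambda>s. y s \<le> L + e) at_top"
proof -
  obtain T1 where T1: "\<And>s. s \<ge> T1 \<Longrightarrow> y s + y' s / a s < L + e/2"
    using order_tendstoD(2)[OF lim, of "L + e/2"] e by (auto simp: eventually_at_top_linorder)
  have "eventually (\<lambda>s. y s - (L + e) \<le> 0) at_top"
  proof (rule eventually_nonpos_if_deriv_le_neg[where T="max T T1" and f'=y' and \<delta>="amin * (e/2)"])
    show "((\<lambda>s. y s - (L + e)) has_real_derivative y' s) (at s)" if "max T T1 \<le> s" for s
      using der that by (auto intro!: derivative_eq_intros)
    show "0 < amin * (e / 2)" using amin e by simp
    fix s assume s: "max T T1 \<le> s" "0 < y s - (L + e)"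
    have as: "a s \<ge> amin" using a s by simp
    have "y' s / a s < - (e/2)" using T1[of s] s by simp
    then have "y' s < a s * (- (e/2))" using as amin by (simp add: divide_less_eq algebra_simps)
    also have "\<dots> \<le> amin * (- (e/2))" using as e by (intro mult_right_mono_neg) auto
    finally show "y' s \<le> - (amin * (e / 2))" by simp
  qed
  then show ?thesis by (rule eventually_mono) simp
qed

lemma tendsto_if_add_deriv_div_tendsto:
  fixes y y' a :: "real \<Rightarrow> real"
  assumes der: "\<And>s. s \<ge> T \<Longrightarrow> (y has_real_derivative y' s) (at s)"
    and a: "\<And>s. s \<ge> T \<Longrightarrow> a s \<ge> amin" and amin: "amin > 0"
    and lim: "((\<lambda>s. y s + y' s / a s) \<longlongrightarrow> L) at_top"
  shows "(y \<longlongrightarrow> L) at_top"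
proof (rule tendstoI)
  fix e :: real assume e: "e > 0"
  have up: "eventually (\<lambda>s. y s \<le> L + e/2) at_top"
    using eventually_le_if_add_deriv_div_tendsto[OF der a amin lim, where e="e/2"] e by simp
  have "((\<lambda>s. - y s + - y' s / a s) \<longlongrightarrow> - L) at_top"
    using tendsto_minus[OF lim] by simp
  then have "eventually (\<lambda>s. - y s \<le> - L + e/2) at_top"
    using eventually_le_if_add_deriv_div_tendsto[OF DERIV_minus[OF der] a amin, where L="-L" and e="e/2"] e by simp
  with up show "eventually (\<lambda>s. dist (y s) L < e) at_top"
    by eventually_elim (use e in \<open>auto simp: dist_real_def\<close>)
qed

lemma antimono_bdd_below_tendsto:
  fixes f :: "real \<Rightarrow> real"
  assumes mono: "\<And>s t. T \<le> s \<Longrightarrow> s \<le> t \<Longrightarrow> f t \<le> f s"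
    and bdd: "\<And>s. T \<le> s \<Longrightarrow> b \<le> f s"
  shows "\<exists>K. (f \<longlongrightarrow> K) at_top"
proof
  define K where "K = Inf (f ` {T..})"
  have bd: "bdd_below (f ` {T..})" using bdd unfolding bdd_below_def by auto
  show "(f \<longlongrightarrow> K) at_top"
  proof (rule tendstoI)
    fix e :: real assume e: "e > 0"
    have "\<exists>x\<in>f ` {T..}. x < K + e"
      unfolding K_def by (rule cInf_lessD) (use bd e in auto)
    then obtain t where t: "t \<ge> T" "f t < K + e" by auto
    have "dist (f s) K < e" if "s \<ge> t" for s
    proof -
      have "K \<le> f s" unfolding K_def by (rule cInf_lower) (use that t bd in auto)
      moreover have "f s \<le> f t" using mono t that by auto
      ultimately show ?thesis using t by (simp add: dist_real_def)
    qed
    then show "eventually (\<lambda>s. dist (f s) K < e) at_top"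
      by (auto simp: eventually_at_top_linorder)
  qed
qed

lemma abs_diff_le_if_deriv_dominated:
  fixes f g f' g' :: "real \<Rightarrow> real"
  assumes "a \<le> b"
    and f: "\<And>x. a \<le> x \<Longrightarrow> x \<le> b \<Longrightarrow> (f has_real_derivative f' x) (at x)"
    and g: "\<And>x. a \<le> x \<Longrightarrow> x \<le> b \<Longrightarrow> (g has_real_derivative g' x) (at x)"
    and dom: "\<And>x. a \<le> x \<Longrightarrow> x \<le> b \<Longrightarrow> \<bar>f' x\<bar> \<le> g' x"
  shows "\<bar>f b - f a\<bar> \<le> g b - g a"
proof -
  have "g a - f a \<le> g b - f b"
  proof (rule DERIV_nonneg_imp_nondecreasing[OF \<open>a \<le> b\<close>])
    fix x assume x: "a \<le> x" "x \<le> b"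
    show "\<exists>y. ((\<lambda>x. g x - f x) has_real_derivative y) (at x) \<and> 0 \<le> y"
      using DERIV_diff[OF g[OF x] f[OF x]] dom[OF x] by (intro exI[of _ "g' x - f' x"]) auto
  qed
  moreover have "g a + f a \<le> g b + f b"
  proof (rule DERIV_nonneg_imp_nondecreasing[OF \<open>a \<le> b\<close>])
    fix x assume x: "a \<le> x" "x \<le> b"
    show "\<exists>y. ((\<lambda>x. g x + f x) has_real_derivative y) (at x) \<and> 0 \<le> y"
      using DERIV_add[OF g[OF x] f[OF x]] dom[OF x] by (intro exI[of _ "g' x + f' x"]) auto
  qed
  ultimately show ?thesis by linarith
qed

lemma tendsto_if_deriv_dominated:
  fixes f g f' g' :: "real \<Rightarrow> real"
  assumes f: "\<And>x. T \<le> x \<Longrightarrow> (f has_real_derivative f' x) (at x)"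
    and g: "\<And>x. T \<le> x \<Longrightarrow> (g has_real_derivative g' x) (at x)"
    and dom: "\<And>x. T \<le> x \<Longrightarrow> \<bar>f' x\<bar> \<le> - g' x"
    and g0: "(g \<longlongrightarrow> 0) at_top"
  shows "\<exists>L. (f \<longlongrightarrow> L) at_top \<and> (\<forall>s\<ge>T. \<bar>f s - L\<bar> \<le> g s)"
proof -
  have diff: "\<bar>f t - f s\<bar> \<le> g s - g t" if "T \<le> s" "s \<le> t" for s t
  proof -
    have "\<bar>f t - f s\<bar> \<le> - g t - - g s"
      by (rule abs_diff_le_if_deriv_dominated[where f'=f' and g'="\<lambda>x. - g' x"])
        (use that f g dom in \<open>auto intro: DERIV_minus\<close>)
    then show ?thesis by simp
  qed
  have ev: "eventually (\<lambda>t. f s - g s \<le> f t - g t \<and> f t + g t \<le> f s + g s) at_top" if "T \<le> s" for s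
    using eventually_ge_at_top[of s]
  proof eventually_elim
    case (elim t)
    with diff[OF that elim] show ?case by (simp add: abs_le_iff)
  qed
  have g_nonneg: "0 \<le> g s" if "T \<le> s" for s
    using ev[OF that] diff[OF that] by (intro tendsto_upperbound[OF g0]) (auto elim!: eventually_mono)
  obtain K where K: "((\<lambda>s. f s + g s) \<longlongrightarrow> K) at_top"
  proof (rule exE[OF antimono_bdd_below_tendsto[of T _ "f T - g T"]])
    show "f t + g t \<le> f s + g s" if "T \<le> s" "s \<le> t" for s t
      using diff[OF that] by simp
    show "f T - g T \<le> f s + g s" if "T \<le> s" for s
      using diff[of T s] g_nonneg[OF that] that by simp
  qed
  have fK: "(f \<longlongrightarrow> K) at_top"
    using tendsto_diff[OF K g0] by simp
  have "\<bar>f s - K\<bar> \<le> g s" if "T \<le> s" for s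
  proof -
    have "K \<le> f s + g s"
      using ev[OF that] by (intro tendsto_upperbound[OF K]) (auto elim!: eventually_mono)
    moreover have "f s - g s \<le> K"
      using ev[OF that] by (intro tendsto_lowerbound[OF tendsto_diff[OF fK g0, simplified]])
        (auto elim!: eventually_mono)
    ultimately show ?thesis by linarith
  qed
  with fK show ?thesis by blast
qed

lemma mult_tendsto_0_if_sq_deriv_tendsto_0:
  fixes F F' :: "real \<Rightarrow> real"
  assumes F0: "(F \<longlongrightarrow> 0) at_top"
    and der: "eventually (\<lambda>s. (F has_real_derivative F' s) (at s)) at_top"
    and lim: "((\<lambda>s. s\<^sup>2 * F' s) \<longlongrightarrow> 0) at_top"
  shows "((\<lambda>s. s * F s) \<longlongrightarrow> 0) at_top"
proof (rule tendstoI)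
  fix e :: real assume e: "e > 0"
  have "eventually (\<lambda>s. s \<ge> 1 \<and> (F has_real_derivative F' s) (at s) \<and> \<bar>s\<^sup>2 * F' s\<bar> < e/2) at_top"
    using eventually_ge_at_top[of 1] der tendstoD[OF lim half_gt_zero[OF e]]
    by eventually_elim auto
  then obtain T where T: "\<And>s. s \<ge> T \<Longrightarrow> s \<ge> 1 \<and> (F has_real_derivative F' s) (at s) \<and> \<bar>s\<^sup>2 * F' s\<bar> < e/2"
    by (auto simp: eventually_at_top_linorder)
  have "\<exists>L. (F \<longlongrightarrow> L) at_top \<and> (\<forall>s\<ge>T. \<bar>F s - L\<bar> \<le> e/2 / s)"
  proof (rule tendsto_if_deriv_dominated[where f'=F' and g'="\<lambda>s. - (e/2) / s\<^sup>2"])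
    fix x assume x: "T \<le> x"
    then have x1: "x \<ge> 1" using T by blast
    show "(F has_real_derivative F' x) (at x)" using T x by blast
    show "((\<lambda>s. e/2 / s) has_real_derivative - (e/2) / x\<^sup>2) (at x)"
      using x1 by (auto intro!: derivative_eq_intros simp: power2_eq_square)
    have "x\<^sup>2 * \<bar>F' x\<bar> \<le> e/2" using T[OF x] by (simp add: abs_mult)
    then show "\<bar>F' x\<bar> \<le> - (- (e/2) / x\<^sup>2)" using x1 by (simp add: field_simps)
  qed real_asymp
  then obtain L where FL: "(F \<longlongrightarrow> L) at_top" and L: "\<And>s. s \<ge> T \<Longrightarrow> \<bar>F s - L\<bar> \<le> e/2 / s"
    by blast
  have "L = 0" using tendsto_unique[OF _ FL F0] by simp
  have "dist (s * F s) 0 < e" if "s \<ge> T" for s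
  proof -
    have "s \<ge> 1" using T that by blast
    then have "\<bar>s * F s\<bar> \<le> e/2" using L[OF that] \<open>L = 0\<close> by (simp add: abs_mult field_simps)
    then show ?thesis using e by simp
  qed
  then show "eventually (\<lambda>s. dist (s * F s) 0 < e) at_top"
    by (auto simp: eventually_at_top_linorder)
qed

lemma pos_if_pos_deriv_at_zeros:
  fixes p p' :: "real \<Rightarrow> real"
  assumes der: "\<And>s. (p has_real_derivative p' s) (at s)"
    and lim: "(p \<longlongrightarrow> c) at_bot" and c: "c > 0"
    and zero: "\<And>s. p s = 0 \<Longrightarrow> p' s > 0"
  shows "p s > 0"
proof (rule ccontr)
  assume "\<not> p s > 0"
  then have ps: "p s \<le> 0" by simp
  have cont: "continuous_on UNIV p" using der by (meson DERIV_isCont continuous_at_imp_continuous_on)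
  obtain T0 where T0: "\<And>t. t \<le> T0 \<Longrightarrow> p t > 0"
    using order_tendstoD(1)[OF lim c] by (auto simp: eventually_at_bot_linorder)
  define T where "T = min T0 (s - 1)"
  have T: "T < s" "p T > 0" using T0 by (auto simp: T_def)
  \<comment> \<open>the first zero of p after T, where p' > 0 contradicts p > 0 just before\<close>
  define S where "S = {T..s} \<inter> {t. p t \<le> 0}"
  have S: "s \<in> S" "bdd_below S" "closed S"
    using ps T by (auto simp: S_def intro!: closed_Int closed_Collect_le cont)
  define t0 where "t0 = Inf S"
  have t0S: "t0 \<in> S" unfolding t0_def using closed_contains_Inf S by blast
  have t0min: "\<And>t. t \<in> S \<Longrightarrow> t0 \<le> t" unfolding t0_def using S by (simp add: cInf_lower)
  have Tt0: "T < t0" "p t0 \<le> 0" using t0S T by (auto simp: S_def order.order_iff_strict)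
  have "p t0 = 0"
  proof (rule ccontr)
    assume "p t0 \<noteq> 0"
    then have neg: "p t0 < 0" using Tt0 by simp
    obtain x where x: "T \<le> x" "x \<le> t0" "p x = p t0 / 2"
      using IVT2'[of p t0 "p t0 / 2" T] neg T Tt0 continuous_on_subset[OF cont] by fastforce
    have "x \<in> S" using x neg t0S by (auto simp: S_def)
    then show False using t0min[of x] x neg by simp
  qed
  then obtain d where d: "d > 0" "\<And>h. h > 0 \<Longrightarrow> h < d \<Longrightarrow> p (t0 - h) < p t0"
    using DERIV_pos_inc_left[OF der zero] by blast
  define h where "h = min (d / 2) (t0 - T)"
  have h: "h > 0" "h < d" "h \<le> t0 - T" using d Tt0 by (auto simp: h_def)
  have "t0 - h \<in> S" using d(2)[OF h(1,2)] \<open>p t0 = 0\<close> h t0S by (auto simp: S_def)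
  then show False using t0min h(1) by fastforce
qed

lemma eventually_bounded_of_tendsto:
  fixes f :: "real \<Rightarrow> real"
  assumes "(f \<longlongrightarrow> L) at_top"
  shows "eventually (\<lambda>s. \<bar>f s\<bar> \<le> \<bar>L\<bar> + 1) at_top"
  using tendstoD[OF assms, of 1] by (auto elim!: eventually_mono simp: dist_real_def)

section \<open>The first-order system in logarithmic variables\<close>

locale radial_log_system =
  fixes nn m \<beta> :: real and w p p' :: "real \<Rightarrow> real"
  assumes n_gt_2: "nn > 2" and m_pos: "0 < m" and Q_pos: "nn - 2 - nn * m > 0" and \<beta>_pos: "\<beta> > 0"
    and w_pos: "\<And>s. w s > 0" and p_pos: "\<And>s. p s > 0"
    and w_deriv: "\<And>s. (w has_real_derivative w s * p s) (at s)"
    and p_deriv: "\<And>s. (p has_real_derivative p' s) (at s)"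
    and ode: "\<And>s. (nn - 1) * (p' s + m * (p s - 2)\<^sup>2 / (1 - m) + (nn - 2) * (p s - 2))
                 + \<beta> * w s * p s = 0"
begin

definition "N = nn - 1"
definition "Q = nn - 2 - nn * m"
definition "P = nn - 2 - (nn + 2) * m"
definition "A = 2 * N * Q / ((1 - m) * \<beta>)"
definition "B = N * P / ((1 - m) * \<beta>)"
definition "C2 = N / ((1 - m) * \<beta>) * (A * B * P + (1 - 2 * m) * A\<^sup>2)"
definition "a s = \<beta> * w s / N"
definition "c s = (P - (1 - 2 * m) * p s) / (1 - m)"
definition "z s = w s * p s"
definition "z' s = - a s * (z s - A) - z s * c s"
definition "y s = w s * (z s - A)"
definition "y' s = z s * (z s - A) + w s * z' s"
definition "y2 s = w s * (y s + A * B)"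
definition "y2' s = z s * (y s + A * B) + w s * y' s"

lemma m_less_1: "m < 1"
proof -
  have "nn * m < nn * 1" using n_gt_2 Q_pos by linarith
  then show ?thesis using n_gt_2 by (simp add: mult_less_cancel_left_pos)
qed

lemma N_pos: "N > 0" using n_gt_2 by (simp add: N_def)
lemma A_pos: "A > 0" using N_pos Q_pos m_less_1 \<beta>_pos by (simp add: A_def Q_def)

lemma p'_eq: "p' s = - (m * (p s - 2)\<^sup>2 / (1 - m) + (nn - 2) * (p s - 2)) - a s * p s"
proof -
  have "N * p' s = N * (- (m * (p s - 2)\<^sup>2 / (1 - m) + (nn - 2) * (p s - 2))) - \<beta> * w s * p s"
    using ode[of s] by (simp add: N_def algebra_simps)
  then show ?thesis using N_pos by (simp add: a_def field_simps)
qed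

lemma z_deriv: "(z has_real_derivative z' s) (at s)"
proof -
  have "(z has_real_derivative (w s * p s) * p s + p' s * w s) (at s)"
    unfolding z_def[abs_def] by (rule DERIV_mult[OF w_deriv p_deriv])
  moreover have "(w s * p s) * p s + p' s * w s = z' s"
  proof -
    define k where "k = 1 - m"
    have m: "m = 1 - k" by (simp add: k_def)
    have "k \<noteq> 0" "N \<noteq> 0" "\<beta> \<noteq> 0" using m_less_1 N_pos \<beta>_pos by (auto simp: k_def)
    then show ?thesis
      unfolding p'_eq z'_def z_def a_def c_def A_def P_def Q_def unfolding m
      by (simp add: field_simps power2_eq_square)
  qed
  ultimately show ?thesis by simp
qed

lemma w_mono: "s \<le> t \<Longrightarrow> w s \<le> w t"
proof (rule DERIV_nonneg_imp_nondecreasing[of s t w])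
  fix x show "\<exists>y. (w has_real_derivative y) (at x) \<and> 0 \<le> y"
    using w_deriv[of x] w_pos[of x] p_pos[of x] by (intro exI[of _ "w x * p x"]) simp
qed

lemma a_ge: "s \<ge> 0 \<Longrightarrow> a s \<ge> \<beta> * w 0 / N"
  using w_mono[of 0 s] \<beta>_pos N_pos by (simp add: a_def divide_right_mono)

lemma a0_pos: "\<beta> * w 0 / N > 0" using \<beta>_pos w_pos N_pos by simp

lemma abs_c_bounded_while_z_small: "\<exists>M\<ge>0. \<forall>s\<ge>0. z s \<le> A / 2 \<longrightarrow> \<bar>c s\<bar> \<le> M"
proof (intro exI conjI allI impI)
  define pmax where "pmax = A / (2 * w 0)"
  show "0 \<le> (\<bar>P\<bar> + \<bar>1 - 2 * m\<bar> * pmax) / (1 - m)"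
    using m_less_1 A_pos w_pos[of 0] by (simp add: pmax_def)
  fix s :: real assume s: "0 \<le> s" "z s \<le> A / 2"
  have "p s = z s / w s" using w_pos[of s] by (simp add: z_def)
  also have "\<dots> \<le> (A / 2) / w 0"
    using s w_mono[OF s(1)] w_pos p_pos[of s] A_pos by (intro frac_le) (auto simp: z_def)
  also have "\<dots> = pmax" by (simp add: pmax_def)
  finally have ps: "p s \<le> pmax" .
  have "\<bar>P - (1 - 2 * m) * p s\<bar> \<le> \<bar>P\<bar> + \<bar>1 - 2 * m\<bar> * p s"
    using p_pos[of s] by (simp add: abs_mult order_trans[OF abs_triangle_ineq4])
  also have "\<dots> \<le> \<bar>P\<bar> + \<bar>1 - 2 * m\<bar> * pmax" using ps by (simp add: mult_left_mono)
  finally show "\<bar>c s\<bar> \<le> (\<bar>P\<bar> + \<bar>1 - 2 * m\<bar> * pmax) / (1 - m)"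
    using m_less_1 by (simp add: c_def abs_divide divide_right_mono)
qed

lemma eventually_z_ge: "\<exists>\<delta>>0. eventually (\<lambda>s. \<delta> \<le> z s) at_top"
proof -
  obtain M where M: "M \<ge> 0" "\<And>s. s \<ge> 0 \<Longrightarrow> z s \<le> A / 2 \<Longrightarrow> \<bar>c s\<bar> \<le> M"
    using abs_c_bounded_while_z_small by blast
  define a0 where "a0 = \<beta> * w 0 / N"
  have a0: "a0 > 0" using a0_pos by (simp add: a0_def)
  define \<delta> where "\<delta> = min (A / 2) (a0 * A / (4 * (M + 1)))"
  have \<delta>: "\<delta> > 0" "\<delta> \<le> A / 2"
    using A_pos a0 M unfolding \<delta>_def by (simp_all only: min.cobounded1) simp
  have "\<delta> \<le> a0 * A / (4 * (M + 1))" unfolding \<delta>_def by (rule min.cobounded2)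
  then have "\<delta> * M + \<delta> \<le> a0 * A / 4" using M(1) by (simp add: pos_le_divide_eq algebra_simps)
  then have \<delta>M: "\<delta> * M \<le> a0 * A / 4" using \<delta>(1) by linarith
  have "eventually (\<lambda>s. \<delta> - z s \<le> 0) at_top"
  proof (rule eventually_nonpos_if_deriv_le_neg[where T=0 and f'="\<lambda>s. - z' s" and \<delta>="a0 * A / 4"])
    show "((\<lambda>s. \<delta> - z s) has_real_derivative - z' s) (at s)" for s
      using z_deriv by (auto intro!: derivative_eq_intros)
    show "0 < a0 * A / 4" using a0 A_pos by simp
    fix s :: real assume s: "0 \<le> s" "0 < \<delta> - z s"
    have zs: "0 < z s" "z s \<le> A / 2" using s \<delta> p_pos w_pos by (auto simp: z_def)
    have "a s * (A - z s) \<ge> a0 * (A / 2)"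
      using a_ge[OF s(1)] zs a0 by (intro mult_mono) (auto simp: a0_def)
    moreover have "z s * c s \<le> \<delta> * M"
    proof -
      have "z s * c s \<le> z s * \<bar>c s\<bar>" using zs by (simp add: mult_left_mono)
      also have "\<dots> \<le> \<delta> * M" using M(2)[OF s(1) zs(2)] zs s M(1) by (intro mult_mono) auto
      finally show ?thesis .
    qed
    ultimately show "- z' s \<le> - (a0 * A / 4)"
      using \<delta>M by (simp add: z'_def algebra_simps)
  qed
  then show ?thesis using \<delta> by (auto elim!: eventually_mono intro!: exI[of _ \<delta>])
qed

lemma eventually_w_ge_linear: "\<exists>\<kappa>>0. eventually (\<lambda>s. \<kappa> * s \<le> w s) at_top"
proof -
  obtain \<delta> T where \<delta>: "\<delta> > 0" and T: "\<And>s. s \<ge> T \<Longrightarrow> \<delta> \<le> z s"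
    using eventually_z_ge by (auto simp: eventually_at_top_linorder)
  have "\<delta> / 2 * s \<le> w s" if s: "s \<ge> 2 * \<bar>T\<bar>" for s
  proof -
    have "w \<bar>T\<bar> - \<delta> * \<bar>T\<bar> \<le> w s - \<delta> * s"
    proof (rule DERIV_nonneg_imp_nondecreasing[of "\<bar>T\<bar>" s "\<lambda>x. w x - \<delta> * x"])
      show "\<bar>T\<bar> \<le> s" using s by simp
      fix x assume x: "\<bar>T\<bar> \<le> x"
      show "\<exists>y. ((\<lambda>x. w x - \<delta> * x) has_real_derivative y) (at x) \<and> 0 \<le> y"
        using T[of x] x w_deriv[of x]
        by (intro exI[of _ "w x * p x - \<delta>"]) (auto intro!: derivative_eq_intros simp: z_def)
    qed
    moreover have "\<delta> * \<bar>T\<bar> \<le> \<delta> * (s / 2)" using s \<delta> by (intro mult_left_mono) auto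
    ultimately show ?thesis using w_pos[of "\<bar>T\<bar>"] by (simp add: algebra_simps)
  qed
  then show ?thesis using \<delta> by (intro exI[of _ "\<delta> / 2"]) (auto simp: eventually_at_top_linorder)
qed

lemma w_tendsto_at_top: "filterlim w at_top at_top"
proof -
  obtain \<kappa> where \<kappa>: "\<kappa> > 0" "eventually (\<lambda>s. \<kappa> * s \<le> w s) at_top"
    using eventually_w_ge_linear by blast
  have "filterlim (\<lambda>s. \<kappa> * s) at_top at_top" using \<kappa>(1) by real_asymp
  then show ?thesis by (rule filterlim_at_top_mono) (use \<kappa> in auto)
qed

lemma inverse_w_tendsto_0: "((\<lambda>s. inverse (w s)) \<longlongrightarrow> 0) at_top"
  using filterlim_at_top_imp_at_infinity[OF w_tendsto_at_top] tendsto_inverse_0 filterlim_compose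
  by blast

lemma eventually_p_le_2: "eventually (\<lambda>s. p s \<le> 2) at_top"
proof -
  have "eventually (\<lambda>s. p s - 2 \<le> 0) at_top"
  proof (rule eventually_nonpos_if_deriv_le_neg[where T=0 and f'=p' and \<delta>="2 * \<beta> * w 0 / N"])
    show "((\<lambda>s. p s - 2) has_real_derivative p' s) (at s)" for s
      using p_deriv by (auto intro!: derivative_eq_intros)
    show "0 < 2 * \<beta> * w 0 / N" using a0_pos by simp
    fix s :: real assume s: "0 \<le> s" "0 < p s - 2"
    have "m * (p s - 2)\<^sup>2 / (1 - m) + (nn - 2) * (p s - 2) \<ge> 0"
      using s m_pos m_less_1 n_gt_2 by simp
    moreover have "a s * p s \<ge> (\<beta> * w 0 / N) * 2"
      using a_ge[OF s(1)] a0_pos s by (intro mult_mono) auto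
    ultimately show "p' s \<le> - (2 * \<beta> * w 0 / N)" unfolding p'_eq by simp
  qed
  then show ?thesis by (rule eventually_mono) simp
qed

lemma p_tendsto_0: "(p \<longlongrightarrow> 0) at_top"
proof (rule tendsto_if_add_deriv_div_tendsto[OF p_deriv a_ge a0_pos])
  define F where "F x = m * (x - 2)\<^sup>2 / (1 - m) + (nn - 2) * (x - 2)" for x
  have eq: "p s + p' s / a s = - (N / \<beta>) * F (p s) * inverse (w s)" for s
    using w_pos[of s] \<beta>_pos N_pos unfolding p'_eq a_def F_def by (simp add: field_simps)
  have "compact (F ` {0..2})"
    unfolding F_def by (intro compact_continuous_image continuous_intros) (use m_less_1 in auto)
  then obtain C where C: "\<And>x. x \<in> {0..2} \<Longrightarrow> \<bar>F x\<bar> \<le> C"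
    using compact_imp_bounded bounded_real by fastforce
  have "((\<lambda>s. - (N / \<beta>) * F (p s) * inverse (w s)) \<longlongrightarrow> 0) at_top"
  proof (rule Lim_null_comparison)
    show "((\<lambda>s. N / \<beta> * C * inverse (w s)) \<longlongrightarrow> 0) at_top"
      by (rule tendsto_mult_right_zero[OF inverse_w_tendsto_0])
    show "eventually (\<lambda>s. norm (- (N / \<beta>) * F (p s) * inverse (w s)) \<le> N / \<beta> * C * inverse (w s)) at_top"
      using eventually_p_le_2
    proof eventually_elim
      case (elim s)
      then have "\<bar>F (p s)\<bar> \<le> C" using C p_pos[of s] by simp
      then show ?case using w_pos[of s] \<beta>_pos N_pos
        by (simp add: abs_mult divide_right_mono mult_left_mono mult_right_mono)
    qed
  qed
  then show "((\<lambda>s. p s + p' s / a s) \<longlongrightarrow> 0) at_top" by (simp add: eq)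
qed

lemma c_tendsto: "(c \<longlongrightarrow> P / (1 - m)) at_top"
  unfolding c_def using p_tendsto_0 m_less_1 by (auto intro!: tendsto_eq_intros)

lemma z_tendsto: "(z \<longlongrightarrow> A) at_top"
proof (rule tendsto_if_add_deriv_div_tendsto[OF z_deriv a_ge a0_pos])
  have eq: "z s + z' s / a s = A - (N / \<beta>) * p s * c s" for s
    using w_pos[of s] \<beta>_pos N_pos unfolding z'_def a_def z_def by (simp add: field_simps)
  have "((\<lambda>s. A - (N / \<beta>) * p s * c s) \<longlongrightarrow> A - (N / \<beta>) * 0 * (P / (1 - m))) at_top"
    by (intro tendsto_intros p_tendsto_0 c_tendsto)
  then show "((\<lambda>s. z s + z' s / a s) \<longlongrightarrow> A) at_top" by (simp add: eq)
qed

lemma y_deriv: "(y has_real_derivative y' s) (at s)"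
proof -
  have "(y has_real_derivative (w s * p s) * (z s - A) + (z' s - 0) * w s) (at s)"
    unfolding y_def[abs_def] by (rule DERIV_mult[OF w_deriv DERIV_diff[OF z_deriv DERIV_const]])
  then show ?thesis by (simp add: y'_def z_def algebra_simps)
qed

lemma y_tendsto: "(y \<longlongrightarrow> - A * B) at_top"
proof (rule tendsto_if_add_deriv_div_tendsto[OF y_deriv a_ge a0_pos])
  have eq: "y s + y' s / a s = (N / \<beta>) * z s * (z s - A) * inverse (w s) - (N / \<beta>) * z s * c s" for s
    using w_pos[of s] \<beta>_pos N_pos unfolding y'_def y_def z'_def a_def by (simp add: field_simps)
  have AB: "- A * B = (N / \<beta>) * A * (A - A) * 0 - (N / \<beta>) * A * (P / (1 - m))"
    using \<beta>_pos N_pos m_less_1 by (simp add: B_def field_simps)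
  have "((\<lambda>s. (N / \<beta>) * z s * (z s - A) * inverse (w s) - (N / \<beta>) * z s * c s)
     \<longlongrightarrow> (N / \<beta>) * A * (A - A) * 0 - (N / \<beta>) * A * (P / (1 - m))) at_top"
    by (intro tendsto_intros z_tendsto c_tendsto inverse_w_tendsto_0)
  then show "((\<lambda>s. y s + y' s / a s) \<longlongrightarrow> - A * B) at_top"
    unfolding eq AB .
qed

lemma y2_deriv: "(y2 has_real_derivative y2' s) (at s)"
proof -
  have "(y2 has_real_derivative (w s * p s) * (y s + A * B) + (y' s + 0) * w s) (at s)"
    unfolding y2_def[abs_def] by (rule DERIV_mult[OF w_deriv DERIV_add[OF y_deriv DERIV_const]])
  then show ?thesis by (simp add: y2'_def z_def algebra_simps)
qed

lemma y2_tendsto: "(y2 \<longlongrightarrow> C2) at_top"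
proof (rule tendsto_if_add_deriv_div_tendsto[OF y2_deriv a_ge a0_pos])
  have eq: "y2 s + y2' s / a s = (N / \<beta>) * z s * (2 * y s + A * B) * inverse (w s)
      + (N / \<beta>) * (- y s * P + (1 - 2 * m) * (z s)\<^sup>2) / (1 - m)" for s
  proof -
    define k where "k = 1 - m"
    have m: "m = 1 - k" by (simp add: k_def)
    have "k \<noteq> 0" "N \<noteq> 0" "\<beta> \<noteq> 0" "w s \<noteq> 0"
      using m_less_1 N_pos \<beta>_pos w_pos[of s] by (auto simp: k_def)
    then show ?thesis
      unfolding y2'_def y2_def y'_def y_def z'_def a_def c_def B_def z_def unfolding m
      by (simp add: field_simps power2_eq_square)
  qed
  have C2: "C2 = (N / \<beta>) * A * (2 * (- A * B) + A * B) * 0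
      + (N / \<beta>) * (- (- A * B) * P + (1 - 2 * m) * A\<^sup>2) / (1 - m)"
    using \<beta>_pos N_pos m_less_1 by (simp add: C2_def field_simps)
  have "((\<lambda>s. (N / \<beta>) * z s * (2 * y s + A * B) * inverse (w s)
      + (N / \<beta>) * (- y s * P + (1 - 2 * m) * (z s)\<^sup>2) / (1 - m)) \<longlongrightarrow>
      (N / \<beta>) * A * (2 * (- A * B) + A * B) * 0
      + (N / \<beta>) * (- (- A * B) * P + (1 - 2 * m) * A\<^sup>2) / (1 - m)) at_top"
    by (intro tendsto_intros z_tendsto y_tendsto inverse_w_tendsto_0) (use m_less_1 in auto)
  then show "((\<lambda>s. y2 s + y2' s / a s) \<longlongrightarrow> C2) at_top"
    unfolding eq C2 .
qed

definition "w_dev s = w s - A * s"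
definition "h1 s = w s - A * s + B * ln s"

lemma eventually_abs_w_dev_le: "\<exists>C\<ge>0. eventually (\<lambda>s. \<bar>w_dev s\<bar> \<le> C * (1 + ln s)) at_top"
proof -
  obtain \<kappa> where \<kappa>: "\<kappa> > 0" "eventually (\<lambda>s. \<kappa> * s \<le> w s) at_top"
    using eventually_w_ge_linear by blast
  define Cy where "Cy = \<bar>A * B\<bar> + 1"
  obtain T where T: "\<And>s. s \<ge> T \<Longrightarrow> s \<ge> 1 \<and> \<kappa> * s \<le> w s \<and> \<bar>y s\<bar> \<le> Cy"
    using eventually_conj[OF eventually_ge_at_top[of 1] eventually_conj[OF \<kappa>(2)
        eventually_bounded_of_tendsto[OF y_tendsto]]]
    by (auto simp: eventually_at_top_linorder Cy_def)
  define K where "K = Cy / \<kappa>"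
  have "\<bar>w_dev s\<bar> \<le> max \<bar>w_dev T\<bar> K * (1 + ln s)" if s: "s \<ge> T" for s
  proof -
    have "\<bar>w_dev s - w_dev T\<bar> \<le> K * ln s - K * ln T"
    proof (rule abs_diff_le_if_deriv_dominated[OF s, where f'="\<lambda>x. z x - A" and g'="\<lambda>x. K / x"])
      fix x assume x: "T \<le> x"
      then have x1: "x \<ge> 1" using T by blast
      show "(w_dev has_real_derivative z x - A) (at x)"
        unfolding w_dev_def[abs_def] using w_deriv[of x]
        by (auto intro!: derivative_eq_intros simp: z_def)
      show "((\<lambda>x. K * ln x) has_real_derivative K / x) (at x)"
        using x1 by (auto intro!: derivative_eq_intros)
      have "\<bar>z x - A\<bar> = \<bar>y x\<bar> / w x" using w_pos[of x] by (simp add: y_def abs_mult)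
      also have "\<dots> \<le> Cy / (\<kappa> * x)" using T[OF x] \<kappa>(1) x1 by (intro frac_le) auto
      finally show "\<bar>z x - A\<bar> \<le> K / x" by (simp add: K_def)
    qed
    moreover have "K \<ge> 0" "ln T \<ge> 0" "ln s \<ge> 0" using \<kappa>(1) T[of T] T[OF s] by (auto simp: K_def Cy_def)
    ultimately have "\<bar>w_dev s\<bar> \<le> \<bar>w_dev T\<bar> + K * ln s"
      by (smt (verit) mult_nonneg_nonneg)
    also have "\<dots> \<le> max \<bar>w_dev T\<bar> K + max \<bar>w_dev T\<bar> K * ln s"
      using \<open>ln s \<ge> 0\<close> by (intro add_mono mult_right_mono) auto
    finally show ?thesis by (simp add: algebra_simps)
  qed
  then show ?thesis by (intro exI[of _ "max \<bar>w_dev T\<bar> K"]) (auto simp: eventually_at_top_linorder)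
qed

lemma h1_deriv: "s > 0 \<Longrightarrow> (h1 has_real_derivative z s - A + B / s) (at s)"
  unfolding h1_def[abs_def] using w_deriv[of s]
  by (auto intro!: derivative_eq_intros simp: z_def field_simps)

lemma h1'_eq: "s > 0 \<Longrightarrow> z s - A + B / s = y2 s / (w s)\<^sup>2 + B * w_dev s / (w s * s)"
  using w_pos[of s] unfolding y2_def y_def w_dev_def
  by (simp add: field_simps power2_eq_square)

lemma eventually_abs_h1'_le:
  "\<exists>C. eventually (\<lambda>s. \<bar>z s - A + B / s\<bar> \<le> C * (1 + ln s) / s\<^sup>2) at_top"
proof -
  obtain \<kappa> where \<kappa>: "\<kappa> > 0" "eventually (\<lambda>s. \<kappa> * s \<le> w s) at_top"
    using eventually_w_ge_linear by blast
  obtain Cd where Cd: "Cd \<ge> 0" "eventually (\<lambda>s. \<bar>w_dev s\<bar> \<le> Cd * (1 + ln s)) at_top"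
    using eventually_abs_w_dev_le by blast
  define C2' where "C2' = \<bar>C2\<bar> + 1"
  show ?thesis
  proof (intro exI[of _ "C2' / \<kappa>\<^sup>2 + \<bar>B\<bar> * Cd / \<kappa>"])
    show "eventually (\<lambda>s. \<bar>z s - A + B / s\<bar> \<le> (C2' / \<kappa>\<^sup>2 + \<bar>B\<bar> * Cd / \<kappa>) * (1 + ln s) / s\<^sup>2) at_top"
      using eventually_ge_at_top[of 1] \<kappa>(2) Cd(2) eventually_bounded_of_tendsto[OF y2_tendsto]
    proof eventually_elim
      case (elim s)
      have s: "s > 0" "1 + ln s \<ge> 1" "\<kappa> * s > 0" "Cd \<ge> 0" using elim(1) \<kappa>(1) Cd(1) by auto
      have "\<bar>y2 s / (w s)\<^sup>2\<bar> \<le> C2' / (\<kappa> * s)\<^sup>2"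
        using elim s by (simp add: abs_divide C2'_def) (intro frac_le power_mono, auto)
      also have "\<dots> = C2' / \<kappa>\<^sup>2 * 1 / s\<^sup>2" by (simp add: power_mult_distrib)
      also have "\<dots> \<le> C2' / \<kappa>\<^sup>2 * (1 + ln s) / s\<^sup>2"
        using s by (intro divide_right_mono mult_left_mono) (auto simp: C2'_def)
      finally have 1: "\<bar>y2 s / (w s)\<^sup>2\<bar> \<le> C2' / \<kappa>\<^sup>2 * (1 + ln s) / s\<^sup>2" .
      have "\<bar>B * w_dev s / (w s * s)\<bar> \<le> \<bar>B\<bar> * (Cd * (1 + ln s)) / (\<kappa> * s * s)"
        using elim s by (simp add: abs_divide abs_mult) (intro frac_le mult_left_mono mult_right_mono, auto)
      also have "\<dots> = \<bar>B\<bar> * Cd / \<kappa> * (1 + ln s) / s\<^sup>2"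
        using s by (simp add: field_simps power2_eq_square)
      finally have 2: "\<bar>B * w_dev s / (w s * s)\<bar> \<le> \<bar>B\<bar> * Cd / \<kappa> * (1 + ln s) / s\<^sup>2" .
      show ?case
        using abs_triangle_ineq[of "y2 s / (w s)\<^sup>2" "B * w_dev s / (w s * s)"] 1 2 h1'_eq[OF s(1)]
        by (simp add: add_divide_distrib distrib_right)
    qed
  qed
qed

lemma h1_tendsto: "\<exists>K. (h1 \<longlongrightarrow> K) at_top"
proof -
  obtain C where "eventually (\<lambda>s. \<bar>z s - A + B / s\<bar> \<le> C * (1 + ln s) / s\<^sup>2) at_top"
    using eventually_abs_h1'_le by blast
  with eventually_ge_at_top[of 1]
  have "eventually (\<lambda>s. s \<ge> 1 \<and> \<bar>z s - A + B / s\<bar> \<le> C * (1 + ln s) / s\<^sup>2) at_top"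
    by eventually_elim auto
  then obtain T where T: "\<And>s. s \<ge> T \<Longrightarrow> s \<ge> 1 \<and> \<bar>z s - A + B / s\<bar> \<le> C * (1 + ln s) / s\<^sup>2"
    by (auto simp: eventually_at_top_linorder)
  have "\<exists>K. (h1 \<longlongrightarrow> K) at_top \<and> (\<forall>s\<ge>T. \<bar>h1 s - K\<bar> \<le> C * (2 + ln s) / s)"
  proof (rule tendsto_if_deriv_dominated[where g'="\<lambda>s. - C * (1 + ln s) / s\<^sup>2"])
    fix x assume "T \<le> x"
    then have x: "x \<ge> 1" "\<bar>z x - A + B / x\<bar> \<le> C * (1 + ln x) / x\<^sup>2" using T by blast+
    show "(h1 has_real_derivative z x - A + B / x) (at x)" using h1_deriv x by simp
    show "((\<lambda>s. C * (2 + ln s) / s) has_real_derivative - C * (1 + ln x) / x\<^sup>2) (at x)"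
      using x by (auto intro!: derivative_eq_intros simp: field_simps power2_eq_square)
    show "\<bar>z x - A + B / x\<bar> \<le> - (- C * (1 + ln x) / x\<^sup>2)" using x by simp
  qed real_asymp
  then show ?thesis by blast
qed

lemma w_dev_div_w_tendsto_0:
  "((\<lambda>s. w_dev s / w s) \<longlongrightarrow> 0) at_top" "((\<lambda>s. (w_dev s)\<^sup>2 / w s) \<longlongrightarrow> 0) at_top"
proof -
  obtain \<kappa> where \<kappa>: "\<kappa> > 0" "eventually (\<lambda>s. \<kappa> * s \<le> w s) at_top"
    using eventually_w_ge_linear by blast
  obtain Cd where Cd: "Cd \<ge> 0" "eventually (\<lambda>s. \<bar>w_dev s\<bar> \<le> Cd * (1 + ln s)) at_top"
    using eventually_abs_w_dev_le by blast
  have bound: "eventually (\<lambda>s. \<bar>w_dev s\<bar> ^ k / w s \<le> Cd ^ k / \<kappa> * ((1 + ln s) ^ k / s)) at_top" for k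
    using eventually_ge_at_top[of 1] \<kappa>(2) Cd(2)
  proof eventually_elim
    case (elim s)
    have "0 \<le> Cd * (1 + ln s)" "0 < \<kappa> * s" using elim \<kappa>(1) Cd(1) by simp_all
    have "\<bar>w_dev s\<bar> ^ k \<le> (Cd * (1 + ln s)) ^ k" using elim(3) by (rule power_mono) simp
    then have "\<bar>w_dev s\<bar> ^ k / w s \<le> (Cd * (1 + ln s)) ^ k / (\<kappa> * s)"
      using \<open>0 \<le> Cd * (1 + ln s)\<close> \<open>0 < \<kappa> * s\<close> elim(2) by (intro frac_le zero_le_power)
    also have "\<dots> = Cd ^ k / \<kappa> * ((1 + ln s) ^ k / s)" by (simp add: power_mult_distrib)
    finally show ?case .
  qed
  have "((\<lambda>s. Cd / \<kappa> * ((1 + ln s) / s)) \<longlongrightarrow> 0) at_top"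
    by (rule tendsto_mult_right_zero) real_asymp
  moreover have "eventually (\<lambda>s. norm (w_dev s / w s) \<le> Cd / \<kappa> * ((1 + ln s) / s)) at_top"
    using bound[of 1] by (rule eventually_mono) (simp add: abs_divide abs_of_pos[OF w_pos])
  ultimately show "((\<lambda>s. w_dev s / w s) \<longlongrightarrow> 0) at_top"
    by (rule Lim_null_comparison[rotated])
  have "((\<lambda>s. Cd\<^sup>2 / \<kappa> * ((1 + ln s)\<^sup>2 / s)) \<longlongrightarrow> 0) at_top"
    by (rule tendsto_mult_right_zero) real_asymp
  moreover have "eventually (\<lambda>s. norm ((w_dev s)\<^sup>2 / w s) \<le> Cd\<^sup>2 / \<kappa> * ((1 + ln s)\<^sup>2 / s)) at_top"
    using bound[of 2] by (rule eventually_mono) (simp add: abs_divide abs_of_pos[OF w_pos])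
  ultimately show "((\<lambda>s. (w_dev s)\<^sup>2 / w s) \<longlongrightarrow> 0) at_top"
    by (rule Lim_null_comparison[rotated])
qed

lemma s_div_w_tendsto: "((\<lambda>s. s / w s) \<longlongrightarrow> 1 / A) at_top"
proof -
  have "s / w s = (1 - w_dev s / w s) / A" for s
    using w_pos[of s] A_pos by (simp add: w_dev_def field_simps)
  moreover have "((\<lambda>s. (1 - w_dev s / w s) / A) \<longlongrightarrow> (1 - 0) / A) at_top"
    by (intro tendsto_intros w_dev_div_w_tendsto_0) (use A_pos in auto)
  ultimately show ?thesis by simp
qed

lemma sq_h1'_eq:
  assumes "s > 0"
  shows "s\<^sup>2 * (z s - A + B / s) + B\<^sup>2 / A * ln s
    = y2 s * (s / w s)\<^sup>2 + B / A * h1 s - B / A * ((w_dev s)\<^sup>2 / w s)"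
proof -
  have "s\<^sup>2 * (z s - A + B / s) = s\<^sup>2 * (y2 s / (w s)\<^sup>2 + B * w_dev s / (w s * s))"
    using h1'_eq[OF assms] by simp
  also have "\<dots> = y2 s * (s / w s)\<^sup>2 + B * s * w_dev s / w s"
    using w_pos[of s] assms by (simp add: field_simps power2_eq_square)
  finally have "s\<^sup>2 * (z s - A + B / s) = y2 s * (s / w s)\<^sup>2 + B * s * w_dev s / w s" .
  moreover have "B * s * w_dev s / w s = B / A * w_dev s - B / A * ((w_dev s)\<^sup>2 / w s)"
    using w_pos[of s] A_pos by (simp add: w_dev_def field_simps power2_eq_square)
  moreover have "h1 s = w_dev s + B * ln s" by (simp add: h1_def w_dev_def)
  ultimately show ?thesis by (simp add: algebra_simps power2_eq_square)
qed

lemma h1_expansion: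
  assumes K: "(h1 \<longlongrightarrow> K) at_top"
  shows "((\<lambda>s. s * (h1 s - K - B\<^sup>2 / A * (1 + ln s) / s + (C2 / A\<^sup>2 + B / A * K) / s)) \<longlongrightarrow> 0) at_top"
proof (rule mult_tendsto_0_if_sq_deriv_tendsto_0)
  define c' where "c' = C2 / A\<^sup>2 + B / A * K"
  define F' where "F' s = z s - A + B / s - (- B\<^sup>2 / A * ln s / s\<^sup>2) + - c' / s\<^sup>2" for s
  have "((\<lambda>s. h1 s - K - B\<^sup>2 / A * ((1 + ln s) / s) + c' * (1 / s)) \<longlongrightarrow> K - K - B\<^sup>2 / A * 0 + c' * 0) at_top"
    by (intro tendsto_intros K) real_asymp+
  then show "((\<lambda>s. h1 s - K - B\<^sup>2 / A * (1 + ln s) / s + (C2 / A\<^sup>2 + B / A * K) / s) \<longlongrightarrow> 0) at_top"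
    by (simp add: c'_def)
  show "eventually (\<lambda>s. ((\<lambda>s. h1 s - K - B\<^sup>2 / A * (1 + ln s) / s + (C2 / A\<^sup>2 + B / A * K) / s)
      has_real_derivative F' s) (at s)) at_top"
    using eventually_gt_at_top[of 0]
  proof eventually_elim
    case (elim s)
    have "((\<lambda>s. h1 s - K) has_real_derivative z s - A + B / s) (at s)"
      using DERIV_diff[OF h1_deriv[OF elim] DERIV_const] by simp
    moreover have "((\<lambda>s. B\<^sup>2 / A * (1 + ln s) / s) has_real_derivative - B\<^sup>2 / A * ln s / s\<^sup>2) (at s)"
      using elim A_pos by (auto intro!: derivative_eq_intros simp: field_simps power2_eq_square)
    moreover have "((\<lambda>s. c' / s) has_real_derivative - c' / s\<^sup>2) (at s)"
      using elim by (auto intro!: derivative_eq_intros simp: power2_eq_square)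
    ultimately show ?case
      unfolding F'_def c'_def[symmetric] by (rule DERIV_add[OF DERIV_diff])
  qed
  have "((\<lambda>s. y2 s * (s / w s)\<^sup>2 + B / A * h1 s - B / A * ((w_dev s)\<^sup>2 / w s) - c')
      \<longlongrightarrow> C2 * (1 / A)\<^sup>2 + B / A * K - B / A * 0 - c') at_top"
    by (intro tendsto_intros y2_tendsto s_div_w_tendsto K w_dev_div_w_tendsto_0)
  moreover have "eventually (\<lambda>s. y2 s * (s / w s)\<^sup>2 + B / A * h1 s - B / A * ((w_dev s)\<^sup>2 / w s) - c'
      = s\<^sup>2 * F' s) at_top"
    using eventually_gt_at_top[of 0]
  proof eventually_elim
    case (elim s)
    have "s\<^sup>2 * F' s = s\<^sup>2 * (z s - A + B / s) + B\<^sup>2 / A * ln s - c'"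
      using elim by (simp add: F'_def algebra_simps)
    then show ?case using sq_h1'_eq[OF elim] by simp
  qed
  ultimately have "((\<lambda>s. s\<^sup>2 * F' s) \<longlongrightarrow> C2 * (1 / A)\<^sup>2 + B / A * K - B / A * 0 - c') at_top"
    by (rule Lim_transform_eventually)
  then show "((\<lambda>s. s\<^sup>2 * F' s) \<longlongrightarrow> 0) at_top"
    by (simp add: c'_def power_divide)
qed

end

section \<open>Radial functions\<close>

lemma partial_eqI:
  fixes F :: "real^'n::finite \<Rightarrow> real"
  assumes "open S" "0 \<in> S" "\<And>\<tau>. \<tau> \<in> S \<Longrightarrow> F (y + \<tau> *\<^sub>R axis i 1) = f \<tau>"
    and "(f has_real_derivative D) (at 0)"
  shows "partial i F y = D"
proof -
  have "((\<lambda>\<tau>. F (y + \<tau> *\<^sub>R axis i 1)) has_real_derivative D) (at 0)"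
    by (rule has_field_derivative_transform_within_open[OF assms(4,1,2)]) (use assms(3) in auto)
  then show ?thesis unfolding partial_def by (rule DERIV_imp_deriv)
qed

lemma partial_radial_on_axis:
  fixes k :: "'n::finite"
  assumes "(g has_real_derivative D) (at r)" "r > 0"
  shows "partial k (\<lambda>x::real^'n. g (norm x)) (r *\<^sub>R axis k 1) = D"
proof (rule partial_eqI[where S="{-r<..}" and f="\<lambda>\<tau>. g (r + \<tau>)"])
  show "g (norm (r *\<^sub>R axis k 1 + \<tau> *\<^sub>R axis k 1 :: real^'n)) = g (r + \<tau>)" if "\<tau> \<in> {-r<..}" for \<tau>
    using that by (simp add: scaleR_add_left[symmetric])
  show "((\<lambda>\<tau>. g (r + \<tau>)) has_real_derivative D) (at 0)"
    using DERIV_shift[of g D 0 r] assms(1) by (simp add: add.commute)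
qed (use assms in auto)

lemma norm_axis_plus_axis:
  fixes k i :: "'n::finite"
  assumes "i \<noteq> k"
  shows "norm (r *\<^sub>R axis k (1::real) + t *\<^sub>R axis i 1) = sqrt (r\<^sup>2 + t\<^sup>2)"
proof -
  have "(r *\<^sub>R axis k (1::real) + t *\<^sub>R axis i 1) \<bullet> (r *\<^sub>R axis k 1 + t *\<^sub>R axis i 1) = r\<^sup>2 + t\<^sup>2"
    using assms by (simp add: inner_add_left inner_add_right inner_axis_axis power2_eq_square)
  then show ?thesis by (simp add: norm_eq_sqrt_inner)
qed

lemma partial_radial_off_axis:
  fixes k i :: "'n::finite"
  assumes g: "\<And>t. t > 0 \<Longrightarrow> (g has_real_derivative g' t) (at t)" and "i \<noteq> k" "r > 0"
  shows "partial i (\<lambda>x::real^'n. g (norm x)) (r *\<^sub>R axis k 1 + t *\<^sub>R axis i 1)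
    = g' (sqrt (r\<^sup>2 + t\<^sup>2)) * (t / sqrt (r\<^sup>2 + t\<^sup>2))"
proof (rule partial_eqI[where S=UNIV and f="\<lambda>\<tau>. g (sqrt (r\<^sup>2 + (t + \<tau>)\<^sup>2))"])
  show "g (norm (r *\<^sub>R axis k 1 + t *\<^sub>R axis i 1 + \<tau> *\<^sub>R axis i 1 :: real^'n))
      = g (sqrt (r\<^sup>2 + (t + \<tau>)\<^sup>2))" for \<tau>
    using norm_axis_plus_axis[OF \<open>i \<noteq> k\<close>, of r "t + \<tau>"] by (simp add: scaleR_add_left add.assoc)
  have \<rho>: "sqrt (r\<^sup>2 + (t + 0)\<^sup>2) > 0" using \<open>r > 0\<close> by (simp add: add_pos_nonneg)
  have "((\<lambda>\<tau>. sqrt (r\<^sup>2 + (t + \<tau>)\<^sup>2)) has_real_derivative t / sqrt (r\<^sup>2 + (t + 0)\<^sup>2)) (at 0)"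
    using \<rho> by (auto intro!: derivative_eq_intros simp: field_simps)
  from DERIV_chain2[OF g[OF \<rho>] this]
  show "((\<lambda>\<tau>. g (sqrt (r\<^sup>2 + (t + \<tau>)\<^sup>2))) has_real_derivative g' (sqrt (r\<^sup>2 + t\<^sup>2)) * (t / sqrt (r\<^sup>2 + t\<^sup>2))) (at 0)"
    by simp
qed auto

lemma laplacian_radial_on_axis:
  fixes k :: "'n::finite"
  assumes g: "\<And>t. t > 0 \<Longrightarrow> (g has_real_derivative g' t) (at t)"
    and g': "\<And>t. t > 0 \<Longrightarrow> (g' has_real_derivative g'' t) (at t)" and r: "r > 0"
  shows "laplacian (\<lambda>x::real^'n. g (norm x)) (r *\<^sub>R axis k 1) = g'' r + (real CARD('n) - 1) * (g' r / r)"
proof -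
  define G where "G = (\<lambda>x::real^'n. g (norm x))"
  have on_axis: "partial k (partial k G) (r *\<^sub>R axis k 1) = g'' r"
  proof (rule partial_eqI[where S="{-r<..}" and f="\<lambda>\<tau>. g' (r + \<tau>)"])
    show "partial k G (r *\<^sub>R axis k 1 + \<tau> *\<^sub>R axis k 1) = g' (r + \<tau>)" if "\<tau> \<in> {-r<..}" for \<tau>
    proof -
      have "r + \<tau> > 0" using that by simp
      from partial_radial_on_axis[OF g[OF this] this, of k] show ?thesis
        by (simp add: G_def scaleR_add_left)
    qed
    show "((\<lambda>\<tau>. g' (r + \<tau>)) has_real_derivative g'' r) (at 0)"
      using DERIV_shift[of g' "g'' r" 0 r] g'[OF r] by (simp add: add.commute)
  qed (use r in auto)
  have off_axis: "partial i (partial i G) (r *\<^sub>R axis k 1) = g' r / r" if "i \<noteq> k" for i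
  proof (rule partial_eqI[where S=UNIV and f="\<lambda>t. g' (sqrt (r\<^sup>2 + t\<^sup>2)) * (t / sqrt (r\<^sup>2 + t\<^sup>2))"])
    show "partial i G (r *\<^sub>R axis k 1 + t *\<^sub>R axis i 1) = g' (sqrt (r\<^sup>2 + t\<^sup>2)) * (t / sqrt (r\<^sup>2 + t\<^sup>2))" for t
      unfolding G_def by (rule partial_radial_off_axis[OF g that r])
    have sr: "sqrt (r\<^sup>2 + 0\<^sup>2) = r" using r by simp
    have "((\<lambda>t. sqrt (r\<^sup>2 + t\<^sup>2)) has_real_derivative 0) (at 0)"
      using r by (auto intro!: derivative_eq_intros)
    from DERIV_chain2[OF _ this, of g' "g'' r"]
    have "((\<lambda>t. g' (sqrt (r\<^sup>2 + t\<^sup>2))) has_real_derivative 0) (at 0)" using g'[OF r] sr by simp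
    moreover have "((\<lambda>t. t / sqrt (r\<^sup>2 + t\<^sup>2)) has_real_derivative 1 / r) (at 0)"
      using r by (auto intro!: derivative_eq_intros simp: field_simps)
    ultimately show "((\<lambda>t. g' (sqrt (r\<^sup>2 + t\<^sup>2)) * (t / sqrt (r\<^sup>2 + t\<^sup>2))) has_real_derivative g' r / r) (at 0)"
      using DERIV_mult sr by fastforce
  qed auto
  have "laplacian G (r *\<^sub>R axis k 1)
      = partial k (partial k G) (r *\<^sub>R axis k 1) + (\<Sum>i\<in>UNIV - {k}. partial i (partial i G) (r *\<^sub>R axis k 1))"
    unfolding laplacian_def by (rule sum.remove) auto
  also have "\<dots> = g'' r + real (CARD('n) - 1) * (g' r / r)"
    by (simp add: on_axis off_axis card_Diff_singleton)
  finally show ?thesis by (simp add: G_def of_nat_diff Suc_leI)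
qed

lemma radial_drift_on_axis:
  fixes k :: "'n::finite"
  assumes "(g has_real_derivative D) (at r)" "r > 0"
  shows "(\<Sum>i\<in>UNIV. (r *\<^sub>R axis k 1) $ i * partial i (\<lambda>x::real^'n. g (norm x)) (r *\<^sub>R axis k 1)) = r * D"
proof -
  have "(\<Sum>i\<in>UNIV. (r *\<^sub>R axis k 1) $ i * partial i (\<lambda>x::real^'n. g (norm x)) (r *\<^sub>R axis k 1))
      = (r *\<^sub>R axis k 1) $ k * partial k (\<lambda>x::real^'n. g (norm x)) (r *\<^sub>R axis k 1)"
    by (subst sum.remove[of _ k]) (auto simp: axis_def intro!: sum.neutral)
  also have "\<dots> = r * D" using partial_radial_on_axis[OF assms, of k] by simp
  finally show ?thesis .
qed

lemma radial_profile_regularity: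
  fixes v :: "real \<Rightarrow> real"
  assumes "C2_fun (\<lambda>x::real^'n::finite. v (norm x))"
  shows "\<And>r. r > 0 \<Longrightarrow> (v has_real_derivative deriv v r) (at r)"
    and "\<And>r. r > 0 \<Longrightarrow> (deriv v has_real_derivative deriv (deriv v) r) (at r)"
    and "(v \<longlongrightarrow> v 0) (at_right 0)"
    and "((\<lambda>r. r * deriv v r) \<longlongrightarrow> 0) (at_right 0)"
proof -
  define V where "V = (\<lambda>x::real^'n. v (norm x))"
  obtain k :: 'n where True by blast
  define e where "e = axis k (1::real)"
  have Vd: "\<And>x. V differentiable (at x)" and Pd: "\<And>x. partial k V differentiable (at x)"
    using assms by (auto simp: C2_fun_def V_def)
  have on_ray: "\<And>t. t \<ge> 0 \<Longrightarrow> V (t *\<^sub>R e) = v t" by (simp add: V_def e_def)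
  have along_ray: "(\<lambda>t. G (t *\<^sub>R e)) differentiable (at r)"
    if "\<And>x. G differentiable (at x)" for G :: "real^'n \<Rightarrow> real" and r
    using differentiable_chain_at[OF bounded_linear_imp_differentiable[OF bounded_linear_scaleR_left] that]
    by (simp add: o_def)
  have deriv_on_ray: "(f has_real_derivative deriv f r) (at r)"
    if G: "\<And>x. G differentiable (at x)" and f: "\<And>t. t > 0 \<Longrightarrow> G (t *\<^sub>R e) = f t" and r: "r > 0"
    for G :: "real^'n \<Rightarrow> real" and f r
  proof -
    have "((\<lambda>t. G (t *\<^sub>R e)) has_real_derivative deriv (\<lambda>t. G (t *\<^sub>R e)) r) (at r)"
      using along_ray[OF G] DERIV_deriv_iff_real_differentiable by blast
    then have "(f has_real_derivative deriv (\<lambda>t. G (t *\<^sub>R e)) r) (at r)"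
      by (rule has_field_derivative_transform_within_open[where S="{0<..}"]) (use r f in auto)
    then show ?thesis using DERIV_imp_deriv by metis
  qed
  show v': "(v has_real_derivative deriv v r) (at r)" if "r > 0" for r
    using deriv_on_ray[OF Vd _ that] on_ray by simp
  have partial_on_ray: "partial k V (t *\<^sub>R e) = deriv v t" if "t > 0" for t
    unfolding V_def e_def by (rule partial_radial_on_axis[OF v'[OF that] that])
  show "(deriv v has_real_derivative deriv (deriv v) r) (at r)" if "r > 0" for r
    using deriv_on_ray[OF Pd partial_on_ray that] .
  have at_right_of_ray: "((\<lambda>t. G (t *\<^sub>R e)) \<longlongrightarrow> G 0) (at_right 0)"
    if "\<And>x. G differentiable (at x)" for G :: "real^'n \<Rightarrow> real"
  proof -
    have "isCont (\<lambda>t. G (t *\<^sub>R e)) 0"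
      using along_ray[OF that] differentiable_imp_continuous_within by blast
    then show ?thesis by (simp add: isCont_def filterlim_mono at_le)
  qed
  have "eventually (\<lambda>t. V (t *\<^sub>R e) = v t) (at_right 0)"
    using on_ray by (auto simp: eventually_at_filter)
  with at_right_of_ray[OF Vd] show "(v \<longlongrightarrow> v 0) (at_right 0)"
    using on_ray[of 0] by (simp add: Lim_transform_eventually)
  have "eventually (\<lambda>t. partial k V (t *\<^sub>R e) = deriv v t) (at_right 0)"
    using partial_on_ray by (auto simp: eventually_at_filter)
  with at_right_of_ray[OF Pd] have "(deriv v \<longlongrightarrow> partial k V 0) (at_right 0)"
    by (simp add: Lim_transform_eventually)
  from tendsto_mult[OF tendsto_ident_at this]
  show "((\<lambda>r. r * deriv v r) \<longlongrightarrow> 0) (at_right 0)" by simp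
qed

lemma radial_ode:
  fixes v :: "real \<Rightarrow> real" and m \<beta> r :: real
  assumes sol: "classical_sol m \<beta> (\<lambda>x::real^'n::finite. v (norm x))" and r: "r > 0"
  shows "(real CARD('n) - 1) / m * (m * ((m - 1) * v r powr (m - 2) * (deriv v r)\<^sup>2 + v r powr (m - 1) * deriv (deriv v) r)
        + (real CARD('n) - 1) * (m * v r powr (m - 1) * deriv v r) / r)
      + 2 * \<beta> / (1 - m) * v r + \<beta> * (r * deriv v r) = 0"
proof -
  obtain k :: 'n where True by blast
  define e where "e = axis k (1::real)"
  have pos: "\<And>t. t \<ge> 0 \<Longrightarrow> v t > 0"
    using sol unfolding classical_sol_def by (metis norm_axis_1 norm_scaleR abs_of_nonneg mult.right_neutral)
  have C2: "C2_fun (\<lambda>x::real^'n. v (norm x))" using sol by (simp add: classical_sol_def)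
  note v' = radial_profile_regularity(1)[OF C2] and v'' = radial_profile_regularity(2)[OF C2]
  define \<phi>1 where "\<phi>1 t = m * v t powr (m - 1) * deriv v t" for t
  define \<phi>2 where "\<phi>2 t = m * ((m - 1) * v t powr (m - 2) * (deriv v t)\<^sup>2 + v t powr (m - 1) * deriv (deriv v) t)" for t
  have d\<phi>: "((\<lambda>t. v t powr m) has_real_derivative \<phi>1 t) (at t)" if "t > 0" for t
    using DERIV_fun_powr[OF v'[OF that] pos[of t], of m] that by (simp add: \<phi>1_def)
  have d\<phi>1: "(\<phi>1 has_real_derivative \<phi>2 t) (at t)" if "t > 0" for t
  proof -
    have "(\<phi>1 has_real_derivative (m * ((m - 1) * v t powr ((m - 1) - of_nat 1) * deriv v t)) * deriv v t
        + deriv (deriv v) t * (m * v t powr (m - 1))) (at t)"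
      unfolding \<phi>1_def[abs_def]
      by (rule DERIV_mult[OF DERIV_cmult[OF DERIV_fun_powr[OF v'[OF that] pos]] v''[OF that]]) (use that in simp)
    then show ?thesis by (simp add: \<phi>2_def algebra_simps power2_eq_square)
  qed
  have "(real CARD('n) - 1) / m * laplacian (\<lambda>y::real^'n. v (norm y) powr m) (r *\<^sub>R e)
      + 2 * \<beta> / (1 - m) * v (norm (r *\<^sub>R e))
      + \<beta> * (\<Sum>i\<in>UNIV. (r *\<^sub>R e) $ i * partial i (\<lambda>x::real^'n. v (norm x)) (r *\<^sub>R e)) = 0"
    using sol unfolding classical_sol_def by blast
  moreover have "laplacian (\<lambda>y::real^'n. v (norm y) powr m) (r *\<^sub>R e) = \<phi>2 r + (real CARD('n) - 1) * (\<phi>1 r / r)"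
    unfolding e_def by (rule laplacian_radial_on_axis[where g="\<lambda>t. v t powr m", OF d\<phi> d\<phi>1 r])
  moreover have "(\<Sum>i\<in>UNIV. (r *\<^sub>R e) $ i * partial i (\<lambda>x::real^'n. v (norm x)) (r *\<^sub>R e)) = r * deriv v r"
    unfolding e_def by (rule radial_drift_on_axis[OF v'[OF r] r])
  ultimately show ?thesis using r by (simp add: e_def \<phi>1_def \<phi>2_def)
qed

section \<open>From the radial profile to the system\<close>

lemma w_fun_deriv:
  assumes pos: "\<And>r. r > 0 \<Longrightarrow> v r > 0" and v': "\<And>r. r > 0 \<Longrightarrow> (v has_real_derivative dv r) (at r)"
  shows "(w_fun m v has_real_derivative
      w_fun m v s * (2 + (1 - m) * (exp s * dv (exp s) / v (exp s)))) (at s)"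
proof -
  have ve: "v (exp s) > 0" using pos by simp
  have "((\<lambda>s. v (exp s)) has_real_derivative dv (exp s) * exp s) (at s)"
    by (rule DERIV_chain2[OF v' DERIV_exp]) simp
  from DERIV_fun_powr[OF this ve, of "1 - m"]
  have "((\<lambda>s. v (exp s) powr (1 - m)) has_real_derivative
      (1 - m) * v (exp s) powr ((1 - m) - of_nat 1) * (dv (exp s) * exp s)) (at s)" .
  moreover have "((\<lambda>s. (exp s)\<^sup>2) has_real_derivative 2 * exp s * exp s) (at s)"
    by (auto intro!: derivative_eq_intros simp: power2_eq_square)
  ultimately have X: "(w_fun m v has_real_derivative (2 * exp s * exp s) * v (exp s) powr (1 - m)
      + (1 - m) * v (exp s) powr ((1 - m) - of_nat 1) * (dv (exp s) * exp s) * (exp s)\<^sup>2) (at s)"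
    unfolding w_fun_def[abs_def] by (rule DERIV_mult[rotated])
  have "v (exp s) powr ((1 - m) - of_nat 1) = v (exp s) powr (1 - m) / v (exp s)"
    unfolding of_nat_1 powr_diff using ve by simp
  then have "(2 * exp s * exp s) * v (exp s) powr (1 - m)
      + (1 - m) * v (exp s) powr ((1 - m) - of_nat 1) * (dv (exp s) * exp s) * (exp s)\<^sup>2
      = w_fun m v s * (2 + (1 - m) * (exp s * dv (exp s) / v (exp s)))"
    using ve by (simp add: w_fun_def field_simps power2_eq_square)
  with X show ?thesis by simp
qed

lemma radial_ode_in_log_variables:
  fixes r V dV ddV q q' nn m \<beta> :: real
  assumes "r > 0" "V > 0" "0 < m" "m < 1"
    and "q = 2 + (1 - m) * (r * dV / V)"
    and "q' = (1 - m) * (((r * dV + r * (r * ddV)) * V - r * dV * (r * dV)) / V\<^sup>2)"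
  shows "(nn - 1) * (q' + m * (q - 2)\<^sup>2 / (1 - m) + (nn - 2) * (q - 2)) + \<beta> * (r\<^sup>2 * V powr (1 - m)) * q
    = (1 - m) * r\<^sup>2 / V powr m * ((nn - 1) / m * (m * ((m - 1) * V powr (m - 2) * dV\<^sup>2
        + V powr (m - 1) * ddV) + (nn - 1) * (m * V powr (m - 1) * dV) / r)
        + 2 * \<beta> / (1 - m) * V + \<beta> * (r * dV))"
proof -
  define M where "M = V powr m"
  define k where "k = 1 - m"
  have M: "M > 0" using assms(2) by (simp add: M_def)
  have pw: "V powr (m - 2) = M / V\<^sup>2" "V powr (m - 1) = M / V" "V powr (1 - m) = V / M"
    using assms(2) by (simp_all add: M_def powr_diff)
  have mk: "m = 1 - k" and "k \<noteq> 0" using assms(4) by (auto simp: k_def)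
  show ?thesis
    unfolding assms(5,6) pw M_def[symmetric] unfolding mk
    using \<open>k \<noteq> 0\<close> assms(1-3) M by (simp add: mk field_simps power2_eq_square)
qed

lemma radial_log_system_of_profile:
  fixes v dv ddv :: "real \<Rightarrow> real" and nn m \<beta> lam :: real
  assumes n: "nn > 2" and m: "0 < m" "nn - 2 - nn * m > 0" and \<beta>: "\<beta> > 0"
    and pos: "\<And>r. r > 0 \<Longrightarrow> v r > 0"
    and v': "\<And>r. r > 0 \<Longrightarrow> (v has_real_derivative dv r) (at r)"
    and v'': "\<And>r. r > 0 \<Longrightarrow> (dv has_real_derivative ddv r) (at r)"
    and ode: "\<And>r. r > 0 \<Longrightarrow> (nn - 1) / m * (m * ((m - 1) * v r powr (m - 2) * (dv r)\<^sup>2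
        + v r powr (m - 1) * ddv r) + (nn - 1) * (m * v r powr (m - 1) * dv r) / r)
        + 2 * \<beta> / (1 - m) * v r + \<beta> * (r * dv r) = 0"
    and v0: "(v \<longlongrightarrow> lam) (at_right 0)" "lam > 0"
    and dv0: "((\<lambda>r. r * dv r) \<longlongrightarrow> 0) (at_right 0)"
  shows "\<exists>p p'. radial_log_system nn m \<beta> (w_fun m v) p p'"
proof -
  have m1: "m < 1"
  proof -
    have "nn * m < nn * 1" using n m by linarith
    then show ?thesis using n by (simp add: mult_less_cancel_left_pos)
  qed
  define p where "p s = 2 + (1 - m) * (exp s * dv (exp s) / v (exp s))" for s
  define p' where "p' s = (1 - m) * (((exp s * dv (exp s) + exp s * (exp s * ddv (exp s))) * v (exp s)
      - exp s * dv (exp s) * (exp s * dv (exp s))) / (v (exp s))\<^sup>2)" for s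
  have ve: "v (exp s) > 0" for s using pos by simp
  have p_deriv: "(p has_real_derivative p' s) (at s)" for s
  proof -
    have "((\<lambda>s. dv (exp s)) has_real_derivative ddv (exp s) * exp s) (at s)"
      by (rule DERIV_chain2[OF v'' DERIV_exp]) simp
    moreover have "((\<lambda>s. v (exp s)) has_real_derivative dv (exp s) * exp s) (at s)"
      by (rule DERIV_chain2[OF v' DERIV_exp]) simp
    ultimately show ?thesis
      unfolding p_def[abs_def] p'_def using ve[of s]
      by (auto intro!: derivative_eq_intros simp: power2_eq_square algebra_simps)
  qed
  have log_ode: "(nn - 1) * (p' s + m * (p s - 2)\<^sup>2 / (1 - m) + (nn - 2) * (p s - 2))
      + \<beta> * w_fun m v s * p s = 0" for s
    using radial_ode_in_log_variables[OF exp_gt_zero ve m(1) m1,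
        where q="p s" and q'="p' s" and dV="dv (exp s)" and ddV="ddv (exp s)" and nn=nn and \<beta>=\<beta>]
      ode[OF exp_gt_zero, of s]
    by (simp add: p_def p'_def w_fun_def)
  have "(p \<longlongrightarrow> 2 + (1 - m) * (0 / lam)) at_bot"
  proof -
    have ex: "filterlim (exp :: real \<Rightarrow> real) (at_right 0) at_bot"
      unfolding filterlim_at by (auto intro!: exp_at_bot always_eventually)
    show ?thesis
      unfolding p_def[abs_def]
      using filterlim_compose[OF dv0 ex] filterlim_compose[OF v0(1) ex] v0(2)
      by (intro tendsto_intros) auto
  qed
  then have p_at_bot: "(p \<longlongrightarrow> 2) at_bot" by simp
  have p'_at_zero: "p' s > 0" if "p s = 0" for s
  proof -
    have "p' s + m * 4 / (1 - m) - 2 * (nn - 2) = 0" using log_ode[of s] that n by simp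
    then have "p' s * (1 - m) = 2 * (nn - 2 - nn * m)" using m1 by (simp add: field_simps)
    also have "\<dots> > 0" using m(2) by simp
    finally have "p' s * (1 - m) > 0" .
    then show ?thesis using m1 by (simp add: zero_less_mult_iff)
  qed
  have "radial_log_system nn m \<beta> (w_fun m v) p p'"
  proof
    show "w_fun m v s > 0" for s using ve[of s] by (simp add: w_fun_def)
    show "p s > 0" for s by (rule pos_if_pos_deriv_at_zeros[OF p_deriv p_at_bot _ p'_at_zero]) simp
    show "(w_fun m v has_real_derivative w_fun m v s * p s) (at s)" for s
      unfolding p_def by (rule w_fun_deriv[OF pos v'])
  qed (use n m \<beta> p_deriv log_ode in auto)
  then show ?thesis by blast
qed

context radial_log_system
begin

lemma h1_fun_eq:
  assumes "w = w_fun m v"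
  shows "h1_fun nn m \<beta> v = h1"
  unfolding h1_def[abs_def] h1_fun_def[abs_def] h_fun_def A_def B_def N_def Q_def P_def
  using assms by simp

lemma h2_fun_eq:
  assumes "w = w_fun m v" "s \<noteq> 0"
  shows "h2_fun nn m \<beta> v K s + (1 - m) * a1_fun nn m \<beta> K / (2 * (nn - 2 - nn * m) * \<beta> * s)
    = h1 s - K - B\<^sup>2 / A * (1 + ln s) / s + (C2 / A\<^sup>2 + B / A * K) / s"
proof -
  define k where "k = 1 - m"
  have mk: "m = 1 - k" and "k \<noteq> 0" using m_less_1 by (auto simp: k_def)
  have "N \<noteq> 0" "Q \<noteq> 0" "\<beta> \<noteq> 0" using N_pos Q_pos \<beta>_pos by (auto simp: Q_def)
  with \<open>k \<noteq> 0\<close> assms show ?thesis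
    unfolding h2_fun_def h1_fun_eq[OF assms(1)] a1_fun_def h1_def C2_def A_def B_def
    unfolding N_def[symmetric] Q_def[symmetric] P_def[symmetric] unfolding mk
    by (simp add: field_simps power2_eq_square)
qed

end

theorem lemma2p8:
  fixes v :: "real \<Rightarrow> real" and n :: nat and m \<beta> lam :: real
  assumes "CARD('n::finite) = n" and "n \<ge> 3"
    and "0 < m" and "m < (real n - 2) / real n" and "m \<noteq> (real n - 2) / (real n + 2)"
    and "lam > 0" and "\<beta> > 0"
    and "classical_sol m \<beta> (\<lambda>x::real^'n. v (norm x))"
    and "v 0 = lam"
  shows "\<exists>K. ((h1_fun (real n) m \<beta> v) \<longlongrightarrow> K) at_top \<and>
           ((\<lambda>s. s * (h2_fun (real n) m \<beta> v K s
                 + (1 - m) * a1_fun (real n) m \<beta> K / (2 * (real n - 2 - real n * m) * \<beta> * s)))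
             \<longlongrightarrow> 0) at_top"
proof -
  note sol = assms(8)
  have regular: "C2_fun (\<lambda>x::real^'n. v (norm x))" using sol by (simp add: classical_sol_def)
  have pos: "\<And>r. r > 0 \<Longrightarrow> v r > 0"
    using sol unfolding classical_sol_def by (metis norm_axis_1 norm_scaleR abs_of_pos mult.right_neutral)
  have Q: "0 < real n - 2 - real n * m" using assms(2,4) by (simp add: pos_less_divide_eq algebra_simps)
  have n: "real n > 2" using assms(2) by simp
  obtain p p' where "radial_log_system (real n) m \<beta> (w_fun m v) p p'"
    using radial_log_system_of_profile[OF n assms(3) Q assms(7) pos
        radial_profile_regularity(1,2)[OF regular] radial_ode[OF sol, unfolded assms(1)]
        radial_profile_regularity(3)[OF regular, unfolded assms(9)] assms(6) radial_profile_regularity(4)[OF regular]]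
    by blast
  then interpret radial_log_system "real n" m \<beta> "w_fun m v" p p' .
  obtain K where K: "(h1 \<longlongrightarrow> K) at_top" using h1_tendsto by blast
  have "eventually (\<lambda>s. s * (h1 s - K - B\<^sup>2 / A * (1 + ln s) / s + (C2 / A\<^sup>2 + B / A * K) / s)
      = s * (h2_fun (real n) m \<beta> v K s
        + (1 - m) * a1_fun (real n) m \<beta> K / (2 * (real n - 2 - real n * m) * \<beta> * s))) at_top"
    using eventually_gt_at_top[of 0] by eventually_elim (subst h2_fun_eq[OF refl], auto)
  with h1_expansion[OF K] K show ?thesis
    by (intro exI[of _ K]) (auto simp: h1_fun_eq intro: Lim_transform_eventually)
qed

end
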